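(* Let the sequences be generated by SONATA in the setting below, under the additional assumptions (A1) $\|\nabla F(\mathbf{x})\|\le L_F<\infty$ for all $\mathbf{x}\in X$, (A2) every subgradient $\boldsymbol\xi\in\partial G(\mathbf{x})$ satisfies $\|\boldsymbol\xi\|\le L_G<\infty$ for all $\mathbf{x}\in X$, and (A3) $\gamma^k\in(0,1]$ with $\sum_k\gamma^k=\infty$, $\sum_k(\gamma^k)^2<\infty$. Then for all $i=1,\dots,I$: (a) $\phi_{lb}\mathbf{1}\le\boldsymbol\phi^k\le\phi_{ub}\mathbf{1}$ for all $k$, with $\phi_{lb}\ge\kappa^{2(I-1)B}>0$ and $\phi_{ub}\le I-\kappa^{2(I-1)B}$; (b) $\sup_k\|\mathbf{y}_{(i)}^k-\bar{\mathbf{y}}_\phi^k\|<\infty$; (c) $\sup_k\|\mathbf{x}_{(i)}^k-\widetilde{\mathbf{x}}_i^k\|<\infty$.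
   Context: Problem: minimize $V(\mathbf{x})\triangleq F(\mathbf{x})+G(\mathbf{x})$, $F=\sum_{i=1}^If_i$, over $\mathbf{x}\in X$, where $X\subseteq\mathbb{R}^m$ is nonempty closed convex; each $f_i:O\to\mathbb{R}$ is $C^1$ on an open set $O\supseteq X$ with $\nabla f_i$ $L_i$-Lipschitz on $X$; $G:O\to\mathbb{R}$ is convex; $V$ is bounded below on $X$. Network: digraphs $G^k=(\{1,\dots,I\},E^k)$, $(j,i)\in E^k$ meaning $j$ can send to $i$, $B$-strongly connected ($\bigcup_{t=k}^{k+B-1}E^t$ strongly connected for every $k$). $\mathbf{A}^k=(a_{ij}^k)$: $a_{ij}^k=0$ if $j\ne i$ and $(j,i)\notin E^k$, $a_{ij}^k\ge\kappa$ if $(j,i)\in E^k$, $a_{ii}^k\ge\kappa$ ($\kappa>0$), nonnegative with $\mathbf{1}^T\mathbf{A}^k=\mathbf{1}^T$. Assumption III.14 on $\widetilde f_i:O\times O\to\mathbb{R}$: $\widetilde f_i(\cdot|\mathbf{x})$ is $\tau_i$-strongly convex on $X$ for all $\mathbf{x}\in X$; $C^1$ on $O$ with $\nabla\widetilde f_i(\mathbf{x}|\mathbf{x})=\nabla f_i(\mathbf{x})$; $\nabla\widetilde f_i(\mathbf{x}|\cdot)$ is $\widetilde L_i$-Lipschitz on $X$. SONATA: initialize $\mathbf{x}_{(i)}^0\in X$, $\phi_{(i)}^0=1$, $\mathbf{y}_{(i)}^0=\nabla f_i(\mathbf{x}_{(i)}^0)$; at iteration $k$, $\widetilde{\mathbf{x}}_i^k=\operatorname{argmin}_{\mathbf{x}\in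 X}\{\widetilde f_i(\mathbf{x}|\mathbf{x}_{(i)}^k)+(I\mathbf{y}_{(i)}^k-\nabla f_i(\mathbf{x}_{(i)}^k))^T(\mathbf{x}-\mathbf{x}_{(i)}^k)+G(\mathbf{x})\}$, $\mathbf{x}_{(i)}^{k+1/2}=\mathbf{x}_{(i)}^k+\gamma^k(\widetilde{\mathbf{x}}_i^k-\mathbf{x}_{(i)}^k)$, $\phi_{(i)}^{k+1}=\sum_ja_{ij}^k\phi_{(j)}^k$, $\mathbf{x}_{(i)}^{k+1}=\frac{1}{\phi_{(i)}^{k+1}}\sum_ja_{ij}^k\phi_{(j)}^k\mathbf{x}_{(j)}^{k+1/2}$, $\mathbf{y}_{(i)}^{k+1}=\frac{1}{\phi_{(i)}^{k+1}}\sum_ja_{ij}^k\phi_{(j)}^k\mathbf{y}_{(j)}^k+\frac{1}{\phi_{(i)}^{k+1}}(\nabla f_i(\mathbf{x}_{(i)}^{k+1})-\nabla f_i(\mathbf{x}_{(i)}^k))$. $\boldsymbol\phi^k=(\phi_{(i)}^k)_i$, $\phi_{lb}=\inf_k\min_i\phi_{(i)}^k$, $\phi_{ub}=\sup_k\max_i\phi_{(i)}^k$, $\bar{\mathbf{y}}_\phi^k\triangleq\frac1I\sum_j\phi_{(j)}^k\mathbf{y}_{(j)}^k$. *)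

theory Defs
  imports "HOL-Analysis.Analysis"
begin

definition strongly_convex_on :: "'a::real_inner set \<Rightarrow> real \<Rightarrow> ('a \<Rightarrow> real) \<Rightarrow> bool" where
  "strongly_convex_on S tau g \<longleftrightarrow> convex_on S (\<lambda>z. g z - tau / 2 * (norm z)\<^sup>2)"

definition subdiff :: "'a::real_inner set \<Rightarrow> ('a \<Rightarrow> real) \<Rightarrow> 'a \<Rightarrow> 'a set" where
  "subdiff U G x = {\<xi>. \<forall>z\<in>U. G z \<ge> G x + \<xi> \<bullet> (z - x)}"

text \<open>A digraph with vertex set V and edge set R (pair (j,i) = edge from j to i) is strongly connected.\<close>
definition strongly_connected_digraph :: "'v set \<Rightarrow> ('v \<times> 'v) set \<Rightarrow> bool" where
  "strongly_connected_digraph V R \<longleftrightarrow> (\<forall>i\<in>V. \<forall>j\<in>V. (i, j) \<in> (R \<inter> V \<times> V)\<^sup>*)"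

definition B_strongly_connected :: "nat \<Rightarrow> nat \<Rightarrow> (nat \<Rightarrow> (nat \<times> nat) set) \<Rightarrow> bool" where
  "B_strongly_connected I B E \<longleftrightarrow>
     (\<forall>k. strongly_connected_digraph {1..I} (\<Union>t\<in>{k..k + B - 1}. E t))"

end

theory Submission
  imports Defs
begin

text \<open>
  The weights \<open>\<phi>\<close> are propagated by the column-stochastic matrices \<open>A\<^sup>k\<close>, so they always sum to
  \<open>I\<close>; by B-strong connectivity the mass of a node holding at least the average 1 reaches every
  node within \<open>T = (I - 1) B\<close> steps, losing at most a factor \<open>\<kappa>\<^sup>T\<close>. This bounds \<open>\<phi>\<close> below by
  \<open>\<kappa>\<^sup>T\<close>, hence above by \<open>I - \<kappa>\<^sup>T\<close>, and makes the normalised weights \<open>a\<^sub>i\<^sub>j \<phi>\<^sub>j / \<phi>\<^sub>i\<close>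
  row-stochastic with all network entries at least \<open>w = \<kappa>\<^sup>T\<^sup>+\<^sup>1 / I\<close>. Over any window of \<open>T\<close>
  steps such averaging shrinks the spread of a vector sequence by the factor \<open>1 - 2 w\<^sup>T\<close>, up to
  twice the accumulated perturbations.

  For SONATA the perturbation of \<open>x\<close> is \<open>\<gamma>\<^sup>k\<close> times the distance to the best responses, and
  strong convexity of the surrogates bounds that distance linearly in \<open>\<parallel>I y\<^sub>i\<parallel> + L\<^sub>G\<close>; gradient
  tracking (\<open>\<Sum> \<phi>\<^sub>i y\<^sub>i = \<Sum> \<nabla>f\<^sub>i(x\<^sub>i)\<close>) and (A1) bound \<open>y\<close> linearly in the spread. The
  perturbation of \<open>y\<close> is a Lipschitz multiple of the step of \<open>x\<close>. Rescaling \<open>y\<close> so that its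
  feedback is absorbed by the contraction, and waiting until \<open>\<gamma>\<^sup>k\<close> is small, the joint spread of
  \<open>(x, y)\<close> is preserved from one window to the next, hence bounded; (b) and (c) follow.
\<close>

section \<open>Convex analysis\<close>

lemma convex_on_has_subgradient:
  fixes G :: "'a::euclidean_space \<Rightarrow> real"
  assumes cG: "convex_on U G" and oU: "open U" and xU: "x \<in> U"
  shows "\<exists>\<xi>. \<xi> \<in> subdiff U G x"
proof -
  let ?E = "epigraph U G"
  have inE: "(x, G x) \<in> ?E" using xU by (simp add: mem_epigraph)
  have notin: "(x, G x) \<notin> rel_interior ?E"
  proof
    assume "(x, G x) \<in> rel_interior ?E"
    then obtain e where e: "e > 0" "cball (x, G x) e \<inter> affine hull ?E \<subseteq> ?E"
      unfolding rel_interior_cball by blast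
    have above: "(x, G x + 1) \<in> ?E" using xU by (simp add: mem_epigraph)
    have "(1 + e) *\<^sub>R (x, G x) + (- e) *\<^sub>R (x, G x + 1) \<in> affine hull ?E"
      by (rule mem_affine[OF affine_affine_hull hull_inc[OF inE] hull_inc[OF above]]) simp
    moreover have "(1 + e) *\<^sub>R (x, G x) + (- e) *\<^sub>R (x, G x + 1) = (x, G x - e)"
      by (simp add: algebra_simps)
    moreover have "(x, G x - e) \<in> cball (x, G x) e"
      using e(1) by (simp add: dist_Pair_Pair)
    ultimately have "(x, G x - e) \<in> ?E" using e(2) by auto
    then show False using e(1) by (simp add: mem_epigraph)
  qed
  obtain n where n: "n \<noteq> 0" "\<And>q. q \<in> ?E \<Longrightarrow> n \<bullet> (x, G x) \<le> n \<bullet> q"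
    by (rule supporting_hyperplane_rel_boundary[OF convex_epigraphI[OF cG] inE notin]) auto
  obtain n1 n0 where n10: "n = (n1, n0)" by fastforce
  have supp: "n1 \<bullet> x + n0 * G x \<le> n1 \<bullet> z + n0 * r" if "z \<in> U" "G z \<le> r" for z r
    using n(2)[of "(z, r)"] that n10 by (simp add: mem_epigraph)
  have "n0 \<ge> 0" using supp[OF xU, of "G x + 1"] by (simp add: algebra_simps)
  moreover have "n0 \<noteq> 0"
  proof
    assume n00: "n0 = 0"
    hence n1: "n1 \<noteq> 0" using n(1) n10 by (auto simp: zero_prod_def)
    obtain t where t: "t > 0" "cball x t \<subseteq> U" using oU xU open_contains_cball by blast
    define z where "z = x - (t / norm n1) *\<^sub>R n1"
    have "z \<in> U" using t n1 by (auto simp: z_def dist_norm)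
    hence "n1 \<bullet> x \<le> n1 \<bullet> z" using supp[of z "G z"] n00 by simp
    also have "n1 \<bullet> z = n1 \<bullet> x - t * norm n1"
      using n1 by (simp add: z_def inner_diff_right power2_norm_eq_inner[symmetric] power2_eq_square)
    finally show False using t n1 by (simp add: mult_le_0_iff)
  qed
  ultimately have n0_pos: "n0 > 0" by simp
  have "G z \<ge> G x + (- (1 / n0) *\<^sub>R n1) \<bullet> (z - x)" if z: "z \<in> U" for z
  proof -
    have "n0 * G x + n1 \<bullet> (x - z) \<le> n0 * G z" using supp[OF z order_refl] by (simp add: inner_diff_right)
    hence "G x + (1 / n0) * (n1 \<bullet> (x - z)) \<le> G z" using n0_pos by (simp add: field_simps)
    thus ?thesis by (simp add: inner_diff_right inner_diff_left algebra_simps)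
  qed
  then show ?thesis unfolding subdiff_def by blast
qed

lemma power2_norm_convex_combination:
  fixes v w :: "'a::real_inner"
  assumes "u + t = 1"
  shows "(norm (u *\<^sub>R v + t *\<^sub>R w))\<^sup>2 = u * (norm v)\<^sup>2 + t * (norm w)\<^sup>2 - u * t * (norm (v - w))\<^sup>2"
proof -
  have t: "t = 1 - u" using assms by simp
  show ?thesis unfolding t
    apply (simp only: power2_norm_eq_inner inner_add_left inner_add_right inner_diff_left
        inner_diff_right inner_scaleR_left inner_scaleR_right inner_commute[of w v])
    by algebra
qed

lemma convex_on_scaled_power2_norm:
  fixes S :: "'a::real_inner set"
  assumes "convex S" and "c \<ge> 0"
  shows "convex_on S (\<lambda>z. c * (norm z)\<^sup>2)"
  unfolding convex_on_def
proof (intro conjI assms(1) ballI allI impI)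
  fix v w :: 'a and u t :: real assume ut: "u \<ge> 0" "t \<ge> 0" "u + t = 1"
  have "(norm (u *\<^sub>R v + t *\<^sub>R w))\<^sup>2 \<le> u * (norm v)\<^sup>2 + t * (norm w)\<^sup>2"
    using power2_norm_convex_combination[OF ut(3), of v w] ut by simp
  from mult_left_mono[OF this assms(2)]
  show "c * (norm (u *\<^sub>R v + t *\<^sub>R w))\<^sup>2 \<le> u * (c * (norm v)\<^sup>2) + t * (c * (norm w)\<^sup>2)"
    by (simp add: algebra_simps)
qed

lemma strongly_convex_on_imp_convex_on:
  assumes "strongly_convex_on S tau g" and "convex S" and "tau \<ge> 0"
  shows "convex_on S g"
  using convex_on_add[OF assms(1)[unfolded strongly_convex_on_def]
      convex_on_scaled_power2_norm[OF assms(2), of "tau / 2"]] assms(3)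
  by simp

lemma strongly_convex_on_midpoint:
  assumes "strongly_convex_on S tau g" and "v \<in> S" "w \<in> S"
  shows "g ((1/2) *\<^sub>R v + (1/2) *\<^sub>R w) \<le> (g v + g w) / 2 - tau / 8 * (norm (v - w))\<^sup>2"
proof -
  let ?m = "(1/2) *\<^sub>R v + (1/2) *\<^sub>R w"
  have "g ?m - tau / 2 * (norm ?m)\<^sup>2
      \<le> (1/2) * (g v - tau / 2 * (norm v)\<^sup>2) + (1/2) * (g w - tau / 2 * (norm w)\<^sup>2)"
    using convex_onD[OF assms(1)[unfolded strongly_convex_on_def], of "1/2" v w] assms(2,3) by simp
  moreover have "(norm ?m)\<^sup>2 = (1/2) * (norm v)\<^sup>2 + (1/2) * (norm w)\<^sup>2 - (1/4) * (norm (v - w))\<^sup>2"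
    using power2_norm_convex_combination[of "1/2" "1/2" v w] by simp
  ultimately show ?thesis by (simp add: algebra_simps)
qed

lemma convex_on_above_tangent:
  fixes g :: "'a::real_inner \<Rightarrow> real"
  assumes cg: "convex_on S g" and v: "v \<in> S" and w: "w \<in> S"
    and d: "(g has_derivative (\<lambda>h. D \<bullet> h)) (at v)"
  shows "g w \<ge> g v + D \<bullet> (w - v)"
proof -
  define e where "e = w - v"
  have "((\<lambda>t. v + t *\<^sub>R e) has_derivative (\<lambda>h. h *\<^sub>R e)) (at 0)"
    by (auto intro!: derivative_eq_intros)
  moreover have "(g has_derivative (\<lambda>h. D \<bullet> h)) (at ((\<lambda>t. v + t *\<^sub>R e) 0))" using d by simp
  ultimately have "((\<lambda>t. g (v + t *\<^sub>R e)) has_derivative (\<lambda>h. D \<bullet> (h *\<^sub>R e))) (at 0)"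
    by (rule has_derivative_compose)
  hence "((\<lambda>t. g (v + t *\<^sub>R e)) has_field_derivative (D \<bullet> e)) (at 0)"
    unfolding has_field_derivative_def by (simp add: mult.commute[of _ "D \<bullet> e"])
  hence lim: "((\<lambda>t. (g (v + t *\<^sub>R e) - g v) / t) \<longlongrightarrow> D \<bullet> e) (at_right 0)"
    unfolding has_field_derivative_iff by (auto intro: tendsto_mono at_le)
  have "eventually (\<lambda>t. t \<in> {0<..<1}) (at_right (0::real))"
    by (rule eventually_at_right_real) simp
  hence "eventually (\<lambda>t. (g (v + t *\<^sub>R e) - g v) / t \<le> g w - g v) (at_right 0)"
  proof eventually_elim
    case (elim t)
    hence t: "0 < t" "t < 1" by auto
    have "v + t *\<^sub>R e = (1 - t) *\<^sub>R v + t *\<^sub>R w" by (simp add: e_def algebra_simps)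
    also have "g \<dots> \<le> (1 - t) * g v + t * g w" using convex_onD[OF cg, of t v w] t v w by simp
    finally have "g (v + t *\<^sub>R e) - g v \<le> t * (g w - g v)" by (simp add: algebra_simps)
    thus ?case using t by (simp add: divide_simps mult.commute)
  qed
  from tendsto_le[OF trivial_limit_at_right_real tendsto_const lim this]
  show ?thesis by (simp add: e_def)
qed

lemma best_response_norm_diff_le:
  fixes g G :: "'a::euclidean_space \<Rightarrow> real"
  assumes cX: "convex X" and XU: "X \<subseteq> U" and oU: "open U" and cG: "convex_on U G"
    and w: "w \<in> X" and tau: "tau > 0" and sc: "strongly_convex_on X tau g"
    and d: "(g has_derivative (\<lambda>h. gw \<bullet> h)) (at w)"
    and am: "is_arg_min (\<lambda>z. g z + (c - gw) \<bullet> (z - w) + G z) (\<lambda>z. z \<in> X) v"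
    and subgrad_bdd: "\<And>\<xi>. \<xi> \<in> subdiff U G w \<Longrightarrow> norm \<xi> \<le> LG"
  shows "norm (w - v) \<le> 4 / tau * (norm c + LG)"
proof -
  define h where "h = (\<lambda>z. g z + (c - gw) \<bullet> (z - w) + G z)"
  have v: "v \<in> X" and hmin: "\<And>z. z \<in> X \<Longrightarrow> h v \<le> h z"
    using am unfolding is_arg_min_def h_def by (auto simp: not_less)
  have wU: "w \<in> U" and vU: "v \<in> U" using XU w v by auto
  define m where "m = (1/2) *\<^sub>R w + (1/2) *\<^sub>R v"
  have mX: "m \<in> X" unfolding m_def using cX w v by (simp add: convexD)
  have hm: "h m \<le> (h w + h v) / 2 - tau / 8 * (norm (w - v))\<^sup>2"
  proof -
    have "g m \<le> (g w + g v) / 2 - tau / 8 * (norm (w - v))\<^sup>2"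
      unfolding m_def by (rule strongly_convex_on_midpoint[OF sc w v])
    moreover have "G m \<le> (1/2) * G w + (1/2) * G v"
      using convex_onD[OF cG, of "1/2" w v] wU vU by (simp add: m_def)
    moreover have "(c - gw) \<bullet> (m - w) = (1/2) * ((c - gw) \<bullet> (v - w))"
      unfolding m_def by (simp add: inner_diff_right inner_add_right algebra_simps)
    ultimately show ?thesis unfolding h_def diff_self inner_zero_right by argo
  qed
  have quad: "tau / 4 * (norm (w - v))\<^sup>2 \<le> h w - h v"
    using hm hmin[OF mX] by argo
  have "g v \<ge> g w + gw \<bullet> (v - w)"
    using convex_on_above_tangent[OF strongly_convex_on_imp_convex_on[OF sc cX] w v d] tau by simp
  moreover obtain \<xi> where \<xi>: "\<xi> \<in> subdiff U G w" using convex_on_has_subgradient[OF cG oU wU] by blast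
  moreover have "G v \<ge> G w + \<xi> \<bullet> (v - w)" using \<xi> vU by (simp add: subdiff_def)
  ultimately have "h w - h v \<le> c \<bullet> (w - v) + \<xi> \<bullet> (w - v)"
    by (simp add: h_def inner_diff_right inner_diff_left algebra_simps)
  also have "\<dots> \<le> (norm c + LG) * norm (w - v)"
    using norm_cauchy_schwarz[of c "w - v"] norm_cauchy_schwarz[of \<xi> "w - v"]
      mult_right_mono[OF subgrad_bdd[OF \<xi>] norm_ge_zero[of "w - v"]]
    by (simp add: algebra_simps)
  finally have "(tau / 4 * norm (w - v)) * norm (w - v) \<le> (norm c + LG) * norm (w - v)"
    using quad by (simp add: power2_eq_square)
  hence "tau / 4 * norm (w - v) \<le> norm c + LG" if "w \<noteq> v"
    using that by (auto intro: mult_right_le_imp_le)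
  moreover have "LG \<ge> 0" using subgrad_bdd[OF \<xi>] norm_ge_zero order_trans by blast
  ultimately show ?thesis
    using tau by (cases "w = v") (auto simp: field_simps)
qed

section \<open>Averaging over time-varying digraphs\<close>

lemma norm_convex_combination_le:
  fixes v :: "nat \<Rightarrow> 'a::real_normed_vector"
  assumes "finite V" and "\<And>j. j \<in> V \<Longrightarrow> c j \<ge> 0" and "(\<Sum>j\<in>V. c j) = 1"
    and "\<And>j. j \<in> V \<Longrightarrow> norm (v j) \<le> M"
  shows "norm (\<Sum>j\<in>V. c j *\<^sub>R v j) \<le> M"
proof -
  have "norm (\<Sum>j\<in>V. c j *\<^sub>R v j) \<le> (\<Sum>j\<in>V. c j * M)"
    using norm_sum[of "\<lambda>j. c j *\<^sub>R v j" V] sum_mono[of V "\<lambda>j. norm (c j *\<^sub>R v j)" "\<lambda>j. c j * M"]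
      assms(2,4) by (smt (verit) mult_left_mono norm_scaleR abs_of_nonneg)
  also have "\<dots> = M" using assms(3) by (simp add: sum_distrib_right[symmetric])
  finally show ?thesis .
qed

lemma norm_diff_weighted_average_le:
  fixes v :: "nat \<Rightarrow> 'a::real_normed_vector"
  assumes "finite V" and "\<And>j. j \<in> V \<Longrightarrow> c j \<ge> 0" and "(\<Sum>j\<in>V. c j) = N" and "N > 0"
    and "\<And>j. j \<in> V \<Longrightarrow> norm (u - v j) \<le> M"
  shows "norm (u - (1 / N) *\<^sub>R (\<Sum>j\<in>V. c j *\<^sub>R v j)) \<le> M"
proof -
  have "u - (1 / N) *\<^sub>R (\<Sum>j\<in>V. c j *\<^sub>R v j) = (\<Sum>j\<in>V. (c j / N) *\<^sub>R (u - v j))"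
    using assms(3,4)
    by (simp add: scaleR_diff_right sum_subtractf scaleR_sum_right scaleR_sum_left[symmetric]
        sum_divide_distrib[symmetric])
  also have "norm \<dots> \<le> M"
    by (rule norm_convex_combination_le) (use assms in \<open>auto simp: sum_divide_distrib[symmetric]\<close>)
  finally show ?thesis .
qed

lemma nat_block_induct:
  fixes k N T :: nat
  assumes "T \<ge> 1" and base: "\<And>k. k < N + T \<Longrightarrow> P k"
    and step: "\<And>k. N \<le> k \<Longrightarrow> (\<And>d. d < T \<Longrightarrow> P (k + d)) \<Longrightarrow> P (k + T)"
  shows "P k"
proof (induction k rule: less_induct)
  case (less k)
  show ?case
  proof (cases "k < N + T")
    case False
    then have "N \<le> k - T" "k = (k - T) + T" by auto
    then show ?thesis using step[of "k - T"] less.IH assms(1) by (metis add_less_cancel_left)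
  qed (rule base)
qed

fun reach :: "(nat \<Rightarrow> (nat \<times> nat) set) \<Rightarrow> nat \<Rightarrow> nat \<Rightarrow> nat \<Rightarrow> nat \<Rightarrow> nat set" where
  "reach E n k j0 0 = {j0}"
| "reach E n k j0 (Suc d) =
     reach E n k j0 d \<union> {i \<in> {1..n}. \<exists>j\<in>reach E n k j0 d. (j, i) \<in> E (k + d)}"

lemma reach_subset: "j0 \<in> {1..n} \<Longrightarrow> reach E n k j0 d \<subseteq> {1..n}"
  by (induction d) auto

lemma reach_mono: "d \<le> d' \<Longrightarrow> reach E n k j0 d \<subseteq> reach E n k j0 d'"
  by (induction d' rule: dec_induct) auto

lemma strongly_connected_digraph_exit_edge:
  assumes "strongly_connected_digraph V R" and "A \<subseteq> V" "j \<in> A" and "i \<in> V" "i \<notin> A"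
  shows "\<exists>a b. (a, b) \<in> R \<and> a \<in> A \<and> b \<in> V \<and> b \<notin> A"
proof -
  have "(j, i) \<in> (R \<inter> V \<times> V)\<^sup>*"
    using assms unfolding strongly_connected_digraph_def by blast
  then show ?thesis using assms(3,5)
    by (induction rule: rtrancl_induct) blast+
qed

lemma card_reach_ge:
  assumes bc: "B_strongly_connected n B E" and B: "B \<ge> 1" and j0: "j0 \<in> {1..n}"
  shows "card (reach E n k j0 (m * B)) \<ge> min n (m + 1)"
proof (induction m)
  case 0 thus ?case by simp
next
  case (Suc m)
  let ?R = "reach E n k j0"
  have sub: "\<And>d. ?R d \<subseteq> {1..n}" using reach_subset[OF j0] by blast
  have mono: "?R (m * B) \<subseteq> ?R (Suc m * B)" by (rule reach_mono) simp
  show ?case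
  proof (cases "?R (m * B) = {1..n}")
    case True
    hence "?R (Suc m * B) = {1..n}" using mono sub by blast
    thus ?thesis by simp
  next
    case False
    then obtain i where i: "i \<in> {1..n}" "i \<notin> ?R (m * B)" using sub by blast
    have "j0 \<in> ?R (m * B)" using reach_mono[of 0 "m * B" E n k j0] by auto
    moreover have "strongly_connected_digraph {1..n} (\<Union>t\<in>{k + m * B..k + m * B + B - 1}. E t)"
      using bc unfolding B_strongly_connected_def by blast
    ultimately obtain a b t where ab: "(a, b) \<in> E t" "t \<in> {k + m * B..k + m * B + B - 1}"
      "a \<in> ?R (m * B)" "b \<in> {1..n}" "b \<notin> ?R (m * B)"
      using strongly_connected_digraph_exit_edge[OF _ sub _ i] by blast
    define r where "r = t - (k + m * B)"
    have r: "r < B" "t = k + (m * B + r)" using ab(2) B by (auto simp: r_def)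
    have "a \<in> ?R (m * B + r)" using ab(3) reach_mono[of "m * B" "m * B + r" E n k j0] by auto
    hence "b \<in> ?R (Suc (m * B + r))" using ab r by auto
    moreover have "?R (Suc (m * B + r)) \<subseteq> ?R (Suc m * B)" by (rule reach_mono) (use r in simp)
    ultimately have "?R (m * B) \<subset> ?R (Suc m * B)" using mono ab(5) by blast
    hence "card (?R (m * B)) < card (?R (Suc m * B))"
      using finite_subset[OF sub] by (blast intro: psubset_card_mono)
    thus ?thesis using Suc.IH by simp
  qed
qed

lemma reach_eq_all:
  assumes "B_strongly_connected n B E" and "B \<ge> 1" and "j0 \<in> {1..n}"
  shows "reach E n k j0 ((n - 1) * B) = {1..n}"
proof (rule card_seteq[OF finite_atLeastAtMost reach_subset[OF assms(3)]])
  show "card {1..n} \<le> card (reach E n k j0 ((n - 1) * B))"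
    using card_reach_ge[OF assms, where k = k and m = "n - 1"] assms(3) by simp
qed

locale edge_weights =
  fixes n :: nat and E :: "nat \<Rightarrow> (nat \<times> nat) set" and W :: "nat \<Rightarrow> nat \<Rightarrow> nat \<Rightarrow> real"
    and w :: real
  assumes weight_nonneg: "\<And>t i j. i \<in> {1..n} \<Longrightarrow> j \<in> {1..n} \<Longrightarrow> W t i j \<ge> 0"
    and weight_edge: "\<And>t i j. i \<in> {1..n} \<Longrightarrow> j \<in> {1..n} \<Longrightarrow> (j, i) \<in> E t \<Longrightarrow> W t i j \<ge> w"
    and weight_diag: "\<And>t i. i \<in> {1..n} \<Longrightarrow> W t i i \<ge> w"
    and min_weight_nonneg: "w \<ge> 0"
begin

lemma weighted_sum_ge_term:
  assumes "i \<in> {1..n}" "j \<in> {1..n}" and "\<And>j. j \<in> {1..n} \<Longrightarrow> s j \<ge> 0"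
  shows "W t i j * s j \<le> (\<Sum>l\<in>{1..n}. W t i l * s l)"
  by (rule member_le_sum) (use assms weight_nonneg in auto)

lemma reach_ge_power:
  assumes s_nonneg: "\<And>d j. j \<in> {1..n} \<Longrightarrow> s d j \<ge> 0"
    and s_Suc: "\<And>d i. i \<in> {1..n} \<Longrightarrow> s (Suc d) i \<ge> (\<Sum>j\<in>{1..n}. W (k + d) i j * s d j)"
    and j0: "j0 \<in> {1..n}"
  shows "i \<in> reach E n k j0 d \<Longrightarrow> s d i \<ge> w ^ d * s 0 j0"
proof (induction d arbitrary: i)
  case 0 thus ?case by simp
next
  case (Suc d)
  have step: "w ^ Suc d * s 0 j0 \<le> s (Suc d) i"
    if "i \<in> {1..n}" "j \<in> reach E n k j0 d" "W (k + d) i j \<ge> w" for j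
  proof -
    have j: "j \<in> {1..n}" using that(2) reach_subset[OF j0] by blast
    have "w ^ Suc d * s 0 j0 = w * (w ^ d * s 0 j0)" by simp
    also have "\<dots> \<le> W (k + d) i j * s d j"
      using Suc.IH[OF that(2)] that(3) min_weight_nonneg s_nonneg[OF j0] s_nonneg[OF j]
      by (intro mult_mono) auto
    also have "\<dots> \<le> (\<Sum>l\<in>{1..n}. W (k + d) i l * s d l)"
      by (rule weighted_sum_ge_term) (use that(1) j s_nonneg in auto)
    also have "\<dots> \<le> s (Suc d) i" by (rule s_Suc[OF that(1)])
    finally show ?thesis .
  qed
  from Suc.prems consider (old) "i \<in> reach E n k j0 d"
    | (new) j where "i \<in> {1..n}" "j \<in> reach E n k j0 d" "(j, i) \<in> E (k + d)" by auto
  then show ?case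
  proof cases
    case old
    then have "i \<in> {1..n}" using reach_subset[OF j0] by blast
    then show ?thesis using step[OF _ old] weight_diag by blast
  next
    case new
    then show ?thesis using step[OF new(1,2)] weight_edge reach_subset[OF j0] by blast
  qed
qed

end

locale mixing = edge_weights +
  assumes row_stochastic: "\<And>t i. i \<in> {1..n} \<Longrightarrow> (\<Sum>j\<in>{1..n}. W t i j) = 1"
begin

lemma weighted_sum_const: "i \<in> {1..n} \<Longrightarrow> (\<Sum>j\<in>{1..n}. W t i j * c) = c"
  using row_stochastic[of i t] by (simp add: sum_distrib_right[symmetric])

lemma lower_bound_propagates:
  assumes rec: "\<And>t i. i \<in> {1..n} \<Longrightarrow> \<bar>s (Suc t) i - (\<Sum>j\<in>{1..n}. W t i j * s t j)\<bar> \<le> \<epsilon> t"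
    and lb: "\<And>j. j \<in> {1..n} \<Longrightarrow> m \<le> s k j"
  shows "j \<in> {1..n} \<Longrightarrow> m - (\<Sum>t<d. \<epsilon> (k + t)) \<le> s (k + d) j"
proof (induction d arbitrary: j)
  case 0 thus ?case using lb by simp
next
  case (Suc d)
  have "m - (\<Sum>t<d. \<epsilon> (k + t)) = (\<Sum>l\<in>{1..n}. W (k + d) j l * (m - (\<Sum>t<d. \<epsilon> (k + t))))"
    using weighted_sum_const[OF Suc.prems] by simp
  also have "\<dots> \<le> (\<Sum>l\<in>{1..n}. W (k + d) j l * s (k + d) l)"
    by (intro sum_mono mult_left_mono) (use Suc.IH Suc.prems weight_nonneg in auto)
  finally show ?case using rec[OF Suc.prems, of "k + d"] by (simp add: abs_le_iff)
qed

lemma consensus_rise: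
  assumes rec: "\<And>t i. i \<in> {1..n} \<Longrightarrow> \<bar>s (Suc t) i - (\<Sum>j\<in>{1..n}. W t i j * s t j)\<bar> \<le> \<epsilon> t"
    and lb: "\<And>j. j \<in> {1..n} \<Longrightarrow> m \<le> s k j"
    and j1: "j1 \<in> {1..n}" and i: "i \<in> reach E n k j1 T"
  shows "w ^ T * (s k j1 - m) \<le> s (k + T) i - m + (\<Sum>t<T. \<epsilon> (k + t))"
proof -
  define r where "r d j = s (k + d) j + ((\<Sum>t<d. \<epsilon> (k + t)) - m)" for d j
  have "w ^ T * r 0 j1 \<le> r T i"
  proof (rule reach_ge_power[OF _ _ j1 i])
    show "r d j \<ge> 0" if "j \<in> {1..n}" for d j
      using lower_bound_propagates[OF rec lb that, of d] by (simp add: r_def)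
    show "(\<Sum>j\<in>{1..n}. W (k + d) i j * r d j) \<le> r (Suc d) i" if i: "i \<in> {1..n}" for d i
    proof -
      have "(\<Sum>j\<in>{1..n}. W (k + d) i j * r d j) = (\<Sum>j\<in>{1..n}. W (k + d) i j * s (k + d) j)
          + (\<Sum>j\<in>{1..n}. W (k + d) i j * ((\<Sum>t<d. \<epsilon> (k + t)) - m))"
        by (simp add: r_def sum.distrib distrib_left)
      also have "\<dots> = (\<Sum>j\<in>{1..n}. W (k + d) i j * s (k + d) j) - m + (\<Sum>t<d. \<epsilon> (k + t))"
        using weighted_sum_const[OF i] by simp
      finally have "(\<Sum>j\<in>{1..n}. W (k + d) i j * r d j)
          = (\<Sum>j\<in>{1..n}. W (k + d) i j * s (k + d) j) - m + (\<Sum>t<d. \<epsilon> (k + t))" .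
      then show ?thesis using rec[OF i, of "k + d"] by (simp add: r_def abs_le_iff)
    qed
  qed
  then show ?thesis by (simp add: r_def)
qed

lemma consensus_contraction_real:
  assumes rec: "\<And>t i. i \<in> {1..n} \<Longrightarrow> \<bar>s (Suc t) i - (\<Sum>j\<in>{1..n}. W t i j * s t j)\<bar> \<le> \<epsilon> t"
    and j0: "j0 \<in> {1..n}" and j1: "j1 \<in> {1..n}"
    and range: "\<And>j. j \<in> {1..n} \<Longrightarrow> s k j0 \<le> s k j \<and> s k j \<le> s k j1"
    and full: "\<And>j. j \<in> {1..n} \<Longrightarrow> reach E n k j T = {1..n}"
    and i: "i \<in> {1..n}" and l: "l \<in> {1..n}"
  shows "s (k + T) l - s (k + T) i \<le> (1 - 2 * w ^ T) * (s k j1 - s k j0) + 2 * (\<Sum>t<T. \<epsilon> (k + t))"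
proof -
  have "w ^ T * (s k j1 - s k j0) \<le> s (k + T) i - s k j0 + (\<Sum>t<T. \<epsilon> (k + t))"
    by (rule consensus_rise[OF rec _ j1]) (use range full[OF j1] i in auto)
  \<comment> \<open>the symmetric estimate from above is the same one for \<open>-s\<close>\<close>
  moreover have "w ^ T * (- s k j0 - - s k j1) \<le> - s (k + T) l - - s k j1 + (\<Sum>t<T. \<epsilon> (k + t))"
  proof (rule consensus_rise[where s = "\<lambda>t j. - s t j", OF _ _ j0])
    fix t i assume "i \<in> {1..n}"
    then show "\<bar>- s (Suc t) i - (\<Sum>j\<in>{1..n}. W t i j * - s t j)\<bar> \<le> \<epsilon> t"
      using rec[of i t] abs_minus_commute[of "s (Suc t) i" "\<Sum>j\<in>{1..n}. W t i j * s t j"]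
      by (simp add: sum_negf)
  qed (use range full[OF j0] l in auto)
  ultimately show ?thesis by (simp add: algebra_simps)
qed

lemma consensus_contraction:
  fixes z :: "nat \<Rightarrow> nat \<Rightarrow> 'a::real_inner"
  assumes rec: "\<And>t i. i \<in> {1..n} \<Longrightarrow> norm (z (Suc t) i - (\<Sum>j\<in>{1..n}. W t i j *\<^sub>R z t j)) \<le> \<epsilon> t"
    and D: "\<And>j l. j \<in> {1..n} \<Longrightarrow> l \<in> {1..n} \<Longrightarrow> norm (z k j - z k l) \<le> D"
    and w_small: "2 * w ^ T \<le> 1"
    and full: "\<And>j. j \<in> {1..n} \<Longrightarrow> reach E n k j T = {1..n}"
    and i: "i \<in> {1..n}" and l: "l \<in> {1..n}"
  shows "norm (z (k + T) i - z (k + T) l) \<le> (1 - 2 * w ^ T) * D + 2 * (\<Sum>t<T. \<epsilon> (k + t))"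
proof -
  define u where "u = z (k + T) i - z (k + T) l"
  have eps_nonneg: "\<epsilon> t \<ge> 0" for t using rec[OF i, of t] norm_ge_zero order_trans by blast
  show ?thesis
  proof (cases "u = 0")
    case True
    then show ?thesis
      using w_small D[OF i i] eps_nonneg by (simp add: u_def sum_nonneg)
  next
    case False
    \<comment> \<open>project onto the unit vector along u and apply the scalar contraction\<close>
    define e where "e = (1 / norm u) *\<^sub>R u"
    have ne: "norm e = 1" using False by (simp add: e_def)
    define s where "s t j = e \<bullet> z t j" for t j
    have srec: "\<bar>s (Suc t) i - (\<Sum>j\<in>{1..n}. W t i j * s t j)\<bar> \<le> \<epsilon> t" if "i \<in> {1..n}" for t i
    proof -
      have "\<bar>s (Suc t) i - (\<Sum>j\<in>{1..n}. W t i j * s t j)\<bar>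
          = \<bar>e \<bullet> (z (Suc t) i - (\<Sum>j\<in>{1..n}. W t i j *\<^sub>R z t j))\<bar>"
        by (simp add: s_def inner_diff_right inner_sum_right)
      also have "\<dots> \<le> norm (z (Suc t) i - (\<Sum>j\<in>{1..n}. W t i j *\<^sub>R z t j))"
        using Cauchy_Schwarz_ineq2[of e] ne by simp
      finally show ?thesis using rec[OF that, of t] by linarith
    qed
    obtain j0 where j0: "j0 \<in> {1..n}" "s k j0 = Min (s k ` {1..n})"
      using Min_in[of "s k ` {1..n}"] i by fastforce
    obtain j1 where j1: "j1 \<in> {1..n}" "s k j1 = Max (s k ` {1..n})"
      using Max_in[of "s k ` {1..n}"] i by fastforce
    have "s (k + T) i - s (k + T) l \<le> (1 - 2 * w ^ T) * (s k j1 - s k j0) + 2 * (\<Sum>t<T. \<epsilon> (k + t))"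
      by (rule consensus_contraction_real[OF srec j0(1) j1(1) _ full l i]) (use j0 j1 in auto)
    moreover have "s (k + T) i - s (k + T) l = e \<bullet> u" by (simp add: s_def u_def inner_diff_right)
    moreover have "e \<bullet> u = norm u"
      using False by (simp add: e_def power2_norm_eq_inner[symmetric] power2_eq_square)
    moreover have "s k j1 - s k j0 \<le> D"
      using norm_cauchy_schwarz[of e "z k j1 - z k j0"] ne D[OF j1(1) j0(1)]
      by (simp add: s_def inner_diff_right)
    ultimately show ?thesis using w_small by (smt (verit) mult_left_mono u_def)
  qed
qed

end

section \<open>The SONATA iterates\<close>

locale sonata =
  fixes I B :: nat
    and X U :: "'a::euclidean_space set"
    and gradf :: "nat \<Rightarrow> 'a \<Rightarrow> 'a"
    and G :: "'a \<Rightarrow> real"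
    and L tau :: "nat \<Rightarrow> real" and L_F L_G :: real
    and ft :: "nat \<Rightarrow> 'a \<Rightarrow> 'a \<Rightarrow> real" and gradft :: "nat \<Rightarrow> 'a \<Rightarrow> 'a \<Rightarrow> 'a"
    and E :: "nat \<Rightarrow> (nat \<times> nat) set"
    and a :: "nat \<Rightarrow> nat \<Rightarrow> nat \<Rightarrow> real"
    and \<kappa> :: real
    and \<gamma> :: "nat \<Rightarrow> real"
    and x xt y :: "nat \<Rightarrow> nat \<Rightarrow> 'a"
    and \<phi> :: "nat \<Rightarrow> nat \<Rightarrow> real"
  assumes I_ge2: "I \<ge> 2"
    and X_convex: "convex X" and U_open: "open U" and XU: "X \<subseteq> U"
    and f_lip: "\<And>i. i \<in> {1..I} \<Longrightarrow> (L i)-lipschitz_on X (gradf i)"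
    and G_convex: "convex_on U G"
    and B_pos: "B \<ge> 1"
    and B_conn: "B_strongly_connected I B E"
    and kappa_pos: "\<kappa> > 0"
    and a_nonneg: "\<And>k i j. i \<in> {1..I} \<Longrightarrow> j \<in> {1..I} \<Longrightarrow> a k i j \<ge> 0"
    and a_edge: "\<And>k i j. i \<in> {1..I} \<Longrightarrow> j \<in> {1..I} \<Longrightarrow> (j, i) \<in> E k \<Longrightarrow> a k i j \<ge> \<kappa>"
    and a_diag: "\<And>k i. i \<in> {1..I} \<Longrightarrow> a k i i \<ge> \<kappa>"
    and a_colstoch: "\<And>k j. j \<in> {1..I} \<Longrightarrow> (\<Sum>i\<in>{1..I}. a k i j) = 1"
    and tau_pos: "\<And>i. i \<in> {1..I} \<Longrightarrow> tau i > 0"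
    and ft_sc: "\<And>i w. i \<in> {1..I} \<Longrightarrow> w \<in> X \<Longrightarrow> strongly_convex_on X (tau i) (\<lambda>z. ft i z w)"
    and ft_deriv: "\<And>i w z. i \<in> {1..I} \<Longrightarrow> w \<in> X \<Longrightarrow> z \<in> U \<Longrightarrow>
                    ((\<lambda>z. ft i z w) has_derivative (\<lambda>h. gradft i z w \<bullet> h)) (at z)"
    and ft_grad_cons: "\<And>i z. i \<in> {1..I} \<Longrightarrow> z \<in> X \<Longrightarrow> gradft i z z = gradf i z"
    and A1: "\<And>z. z \<in> X \<Longrightarrow> norm (\<Sum>i\<in>{1..I}. gradf i z) \<le> L_F"
    and A2: "\<And>z \<xi>. z \<in> X \<Longrightarrow> \<xi> \<in> subdiff U G z \<Longrightarrow> norm \<xi> \<le> L_G"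
    and A3_range: "\<And>k. \<gamma> k \<in> {0<..1}"
    and A3_sq: "summable (\<lambda>k. (\<gamma> k)\<^sup>2)"
    and init_x: "\<And>i. i \<in> {1..I} \<Longrightarrow> x 0 i \<in> X"
    and init_phi: "\<And>i. i \<in> {1..I} \<Longrightarrow> \<phi> 0 i = 1"
    and init_y: "\<And>i. i \<in> {1..I} \<Longrightarrow> y 0 i = gradf i (x 0 i)"
    and xt_def: "\<And>k i. i \<in> {1..I} \<Longrightarrow>
        is_arg_min (\<lambda>z. ft i z (x k i) + (real I *\<^sub>R y k i - gradf i (x k i)) \<bullet> (z - x k i) + G z)
                   (\<lambda>z. z \<in> X) (xt k i)"
    and phi_upd: "\<And>k i. i \<in> {1..I} \<Longrightarrow> \<phi> (Suc k) i = (\<Sum>j\<in>{1..I}. a k i j * \<phi> k j)"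
    and x_upd: "\<And>k i. i \<in> {1..I} \<Longrightarrow> x (Suc k) i =
        (1 / \<phi> (Suc k) i) *\<^sub>R
          (\<Sum>j\<in>{1..I}. (a k i j * \<phi> k j) *\<^sub>R (x k j + \<gamma> k *\<^sub>R (xt k j - x k j)))"
    and y_upd: "\<And>k i. i \<in> {1..I} \<Longrightarrow> y (Suc k) i =
        (1 / \<phi> (Suc k) i) *\<^sub>R (\<Sum>j\<in>{1..I}. (a k i j * \<phi> k j) *\<^sub>R y k j)
        + (1 / \<phi> (Suc k) i) *\<^sub>R (gradf i (x (Suc k) i) - gradf i (x k i))"
begin

abbreviation T :: nat where "T \<equiv> (I - 1) * B"

lemma T_pos: "T \<ge> 1"
  using I_ge2 B_pos by simp

lemma reach_all: "j \<in> {1..I} \<Longrightarrow> reach E I k j T = {1..I}"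
  by (rule reach_eq_all[OF B_conn B_pos])

lemma kappa_le_one: "\<kappa> \<le> 1"
proof -
  have "a 0 1 1 \<le> (\<Sum>i\<in>{1..I}. a 0 i 1)"
    by (rule member_le_sum) (use a_nonneg I_ge2 in auto)
  then show ?thesis using a_diag[of 1 0] a_colstoch[of 1 0] I_ge2 by simp
qed

lemma phi_edge_weights: "edge_weights I E a \<kappa>"
  by unfold_locales (use a_nonneg a_edge a_diag kappa_pos in auto)

lemma phi_pos: "i \<in> {1..I} \<Longrightarrow> \<phi> k i > 0"
proof (induction k arbitrary: i)
  case 0 thus ?case using init_phi by simp
next
  case (Suc k)
  have "0 < a k i i" using a_diag[OF Suc.prems, of k] kappa_pos by linarith
  then have "0 < a k i i * \<phi> k i" using Suc.IH[OF Suc.prems] by simp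
  also have "\<dots> \<le> (\<Sum>j\<in>{1..I}. a k i j * \<phi> k j)"
    using edge_weights.weighted_sum_ge_term[OF phi_edge_weights Suc.prems Suc.prems] Suc.IH
    by (simp add: less_imp_le)
  finally show ?case using phi_upd[OF Suc.prems] by simp
qed

lemma phi_sum: "(\<Sum>i\<in>{1..I}. \<phi> k i) = real I"
proof (induction k)
  case 0 thus ?case using init_phi by simp
next
  case (Suc k)
  have "(\<Sum>i\<in>{1..I}. \<phi> (Suc k) i) = (\<Sum>i\<in>{1..I}. \<Sum>j\<in>{1..I}. a k i j * \<phi> k j)"
    using phi_upd by simp
  also have "\<dots> = (\<Sum>j\<in>{1..I}. \<Sum>i\<in>{1..I}. a k i j * \<phi> k j)"
    by (rule sum.swap)
  also have "\<dots> = (\<Sum>j\<in>{1..I}. \<phi> k j)"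
    using a_colstoch by (simp add: sum_distrib_right[symmetric])
  finally show ?case using Suc by simp
qed

lemma phi_ge_kappa_power: "i \<in> {1..I} \<Longrightarrow> \<phi> k i \<ge> \<kappa> ^ k"
proof (induction k arbitrary: i)
  case 0 thus ?case using init_phi by simp
next
  case (Suc k)
  have "\<kappa> ^ Suc k = \<kappa> * \<kappa> ^ k" by simp
  also have "\<dots> \<le> a k i i * \<phi> k i"
    using Suc.IH[OF Suc.prems] a_diag[OF Suc.prems, of k] kappa_pos by (intro mult_mono) auto
  also have "\<dots> \<le> (\<Sum>j\<in>{1..I}. a k i j * \<phi> k j)"
    using edge_weights.weighted_sum_ge_term[OF phi_edge_weights Suc.prems Suc.prems] phi_pos
    by (simp add: less_imp_le)
  finally show ?case using phi_upd[OF Suc.prems] by simp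
qed

lemma phi_lower: "i \<in> {1..I} \<Longrightarrow> \<phi> k i \<ge> \<kappa> ^ T"
proof (cases "k < T")
  case True
  assume i: "i \<in> {1..I}"
  have "\<kappa> ^ T \<le> \<kappa> ^ k" using True kappa_pos kappa_le_one by (intro power_decreasing) auto
  thus ?thesis using phi_ge_kappa_power[OF i, of k] by linarith
next
  case False
  assume i: "i \<in> {1..I}"
  then obtain k' where k': "k = k' + T" using False by (metis add.commute le_iff_add not_less)
  \<comment> \<open>some node carries at least the average mass 1, and it spreads to all nodes within T steps\<close>
  obtain j0 where j0: "j0 \<in> {1..I}" "\<phi> k' j0 \<ge> 1"
  proof (rule ccontr)
    assume "\<not> thesis"
    hence "(\<Sum>j\<in>{1..I}. \<phi> k' j) < (\<Sum>j\<in>{1..I}. 1)"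
      using that I_ge2 by (intro sum_strict_mono) force+
    thus False using phi_sum[of k'] by simp
  qed
  have "\<kappa> ^ T * \<phi> (k' + 0) j0 \<le> \<phi> (k' + T) i"
    by (rule edge_weights.reach_ge_power[OF phi_edge_weights, where k = k' and s = "\<lambda>d j. \<phi> (k' + d) j"])
       (use phi_pos phi_upd j0 reach_all[OF j0(1), of k'] i in \<open>auto simp: less_imp_le\<close>)
  moreover have "\<kappa> ^ T \<le> \<kappa> ^ T * \<phi> k' j0" using j0 kappa_pos by simp
  ultimately show ?thesis by (simp add: k')
qed

lemma phi_upper: "i \<in> {1..I} \<Longrightarrow> \<phi> k i \<le> real I - \<kappa> ^ T"
proof -
  assume i: "i \<in> {1..I}"
  have "real (I - 1) * \<kappa> ^ T = (\<Sum>j\<in>{1..I} - {i}. \<kappa> ^ T)" using i by simp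
  also have "\<dots> \<le> (\<Sum>j\<in>{1..I} - {i}. \<phi> k j)" by (rule sum_mono) (use phi_lower in auto)
  also have "\<dots> = real I - \<phi> k i" using i phi_sum[of k] by (simp add: sum_diff1)
  finally have "real (I - 1) * \<kappa> ^ T \<le> real I - \<phi> k i" .
  moreover have "\<kappa> ^ T \<le> real (I - 1) * \<kappa> ^ T"
    using mult_right_mono[of 1 "real (I - 1)" "\<kappa> ^ T"] I_ge2 kappa_pos by simp
  ultimately show ?thesis by linarith
qed

lemma phi_bounds:
  "(let S = {\<phi> k i | k i. i \<in> {1..I}}; \<phi>_lb = Inf S; \<phi>_ub = Sup S in
     bdd_below S \<and> bdd_above S \<and>
     (\<forall>k. \<forall>i\<in>{1..I}. \<phi>_lb \<le> \<phi> k i \<and> \<phi> k i \<le> \<phi>_ub) \<and>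
     \<phi>_lb \<ge> \<kappa> ^ (2 * (I - 1) * B) \<and> \<kappa> ^ (2 * (I - 1) * B) > 0 \<and>
     \<phi>_ub \<le> real I - \<kappa> ^ (2 * (I - 1) * B))"
proof -
  define S where "S = {\<phi> k i | k i. i \<in> {1..I}}"
  have S_ne: "S \<noteq> {}" using I_ge2 by (auto simp: S_def)
  have below: "bdd_below S" unfolding S_def bdd_below_def using phi_lower by blast
  have above: "bdd_above S" unfolding S_def bdd_above_def using phi_upper by blast
  have "\<kappa> ^ (2 * (I - 1) * B) \<le> \<kappa> ^ T"
    using kappa_pos kappa_le_one by (intro power_decreasing) auto
  moreover have "Inf S \<ge> \<kappa> ^ T" by (rule cInf_greatest[OF S_ne]) (use phi_lower in \<open>auto simp: S_def\<close>)
  moreover have "Sup S \<le> real I - \<kappa> ^ T" by (rule cSup_least[OF S_ne]) (use phi_upper in \<open>auto simp: S_def\<close>)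
  moreover have "\<phi> k i \<in> S" if "i \<in> {1..I}" for k i using that by (auto simp: S_def)
  ultimately show ?thesis
    unfolding Let_def S_def[symmetric]
    using below above kappa_pos cInf_lower[OF _ below] cSup_upper[OF _ above] by auto
qed

definition mix :: "nat \<Rightarrow> nat \<Rightarrow> nat \<Rightarrow> real" where
  "mix t i j = a t i j * \<phi> t j / \<phi> (Suc t) i"

definition min_mix :: real where
  "min_mix = \<kappa> * \<kappa> ^ T / real I"

lemma min_mix_pos: "min_mix > 0"
  using kappa_pos I_ge2 by (simp add: min_mix_def)

lemma two_min_mix_power_le: "2 * min_mix ^ T \<le> 1"
proof -
  have "\<kappa> * \<kappa> ^ T \<le> 1" using kappa_pos kappa_le_one by (simp add: mult_le_one power_le_one)
  hence half: "min_mix \<le> 1 / 2" using I_ge2 by (simp add: min_mix_def divide_simps)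
  hence "min_mix ^ T \<le> min_mix ^ 1" using min_mix_pos T_pos by (intro power_decreasing) auto
  thus ?thesis using half by simp
qed

lemma mix_ge_min_mix:
  assumes "i \<in> {1..I}" "j \<in> {1..I}" and "a t i j \<ge> \<kappa>"
  shows "mix t i j \<ge> min_mix"
proof -
  have "\<kappa> * \<kappa> ^ T \<le> a t i j * \<phi> t j"
    using assms phi_lower[OF assms(2)] kappa_pos by (intro mult_mono) auto
  moreover have "0 < \<phi> (Suc t) i" "\<phi> (Suc t) i \<le> real I"
    using phi_pos[OF assms(1)] phi_upper[OF assms(1), of "Suc t"] zero_less_power[OF kappa_pos, of T]
    by auto
  ultimately have "\<kappa> * \<kappa> ^ T / real I \<le> a t i j * \<phi> t j / \<phi> (Suc t) i"
    using kappa_pos by (intro frac_le) (auto intro: order_trans[rotated])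
  thus ?thesis by (simp add: mix_def min_mix_def)
qed

sublocale mixing I E mix min_mix
proof
  fix t i j assume i: "i \<in> {1..I}" and j: "j \<in> {1..I}"
  show "mix t i j \<ge> 0"
    unfolding mix_def using a_nonneg[OF i j, of t] phi_pos[OF j, of t] phi_pos[OF i, of "Suc t"] by simp
  show "(j, i) \<in> E t \<Longrightarrow> mix t i j \<ge> min_mix" using mix_ge_min_mix[OF i j a_edge[OF i j]] .
next
  fix t i assume i: "i \<in> {1..I}"
  show "mix t i i \<ge> min_mix" using mix_ge_min_mix[OF i i a_diag[OF i]] .
  show "(\<Sum>j\<in>{1..I}. mix t i j) = 1"
    using phi_upd[OF i, of t] phi_pos[OF i, of "Suc t"] by (simp add: mix_def sum_divide_distrib[symmetric])
qed (use min_mix_pos in simp)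

lemma x_Suc: "i \<in> {1..I} \<Longrightarrow>
    x (Suc k) i = (\<Sum>j\<in>{1..I}. mix k i j *\<^sub>R (x k j + \<gamma> k *\<^sub>R (xt k j - x k j)))"
  unfolding x_upd mix_def by (simp add: scaleR_sum_right)

lemma y_Suc: "i \<in> {1..I} \<Longrightarrow> y (Suc k) i = (\<Sum>j\<in>{1..I}. mix k i j *\<^sub>R y k j)
    + (1 / \<phi> (Suc k) i) *\<^sub>R (gradf i (x (Suc k) i) - gradf i (x k i))"
  unfolding y_upd mix_def by (simp add: scaleR_sum_right)

lemma xt_in_X: "i \<in> {1..I} \<Longrightarrow> xt k i \<in> X"
  using xt_def[of i k] by (simp add: is_arg_min_def)

lemma x_in_X: "i \<in> {1..I} \<Longrightarrow> x k i \<in> X"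
proof (induction k arbitrary: i)
  case 0 thus ?case using init_x by simp
next
  case (Suc k)
  have "x k j + \<gamma> k *\<^sub>R (xt k j - x k j) \<in> X" if j: "j \<in> {1..I}" for j
  proof -
    have "x k j + \<gamma> k *\<^sub>R (xt k j - x k j) = (1 - \<gamma> k) *\<^sub>R x k j + \<gamma> k *\<^sub>R xt k j"
      by (simp add: algebra_simps)
    thus ?thesis using convexD[OF X_convex Suc.IH[OF j] xt_in_X[OF j]] A3_range[of k] by simp
  qed
  then show ?case
    unfolding x_Suc[OF Suc.prems]
    by (intro convex_sum[OF finite_atLeastAtMost X_convex row_stochastic[OF Suc.prems]])
       (use weight_nonneg[OF Suc.prems] in auto)
qed

lemma gradient_tracking: "(\<Sum>i\<in>{1..I}. \<phi> k i *\<^sub>R y k i) = (\<Sum>i\<in>{1..I}. gradf i (x k i))"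
proof (induction k)
  case 0 thus ?case using init_phi init_y by simp
next
  case (Suc k)
  have "\<phi> (Suc k) i *\<^sub>R y (Suc k) i = (\<Sum>j\<in>{1..I}. (a k i j * \<phi> k j) *\<^sub>R y k j)
      + (gradf i (x (Suc k) i) - gradf i (x k i))" if i: "i \<in> {1..I}" for i
    using phi_pos[OF i, of "Suc k"] unfolding y_upd[OF i] by (simp add: scaleR_add_right)
  then have "(\<Sum>i\<in>{1..I}. \<phi> (Suc k) i *\<^sub>R y (Suc k) i)
      = (\<Sum>i\<in>{1..I}. \<Sum>j\<in>{1..I}. (a k i j * \<phi> k j) *\<^sub>R y k j)
        + (\<Sum>i\<in>{1..I}. gradf i (x (Suc k) i) - gradf i (x k i))"
    by (simp add: sum.distrib)
  also have "(\<Sum>i\<in>{1..I}. \<Sum>j\<in>{1..I}. (a k i j * \<phi> k j) *\<^sub>R y k j)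
      = (\<Sum>j\<in>{1..I}. (\<Sum>i\<in>{1..I}. a k i j) *\<^sub>R (\<phi> k j *\<^sub>R y k j))"
    by (subst sum.swap) (simp add: scaleR_sum_left sum_distrib_right)
  also have "\<dots> = (\<Sum>j\<in>{1..I}. \<phi> k j *\<^sub>R y k j)" using a_colstoch by simp
  finally show ?case using Suc by (simp add: sum_subtractf)
qed

definition Lsum :: real where "Lsum = (\<Sum>i\<in>{1..I}. L i)"

definition c_tau :: real where "c_tau = (\<Sum>i\<in>{1..I}. 4 / tau i)"

lemma L_nonneg: "i \<in> {1..I} \<Longrightarrow> L i \<ge> 0"
  using lipschitz_on_nonneg[OF f_lip] .

lemma L_le_Lsum: "i \<in> {1..I} \<Longrightarrow> L i \<le> Lsum"
  unfolding Lsum_def by (rule member_le_sum) (use L_nonneg in auto)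

lemma Lsum_nonneg: "Lsum \<ge> 0"
  unfolding Lsum_def by (rule sum_nonneg) (rule L_nonneg)

lemma c_tau_nonneg: "c_tau \<ge> 0"
  unfolding c_tau_def by (rule sum_nonneg) (use tau_pos in \<open>auto simp: less_imp_le\<close>)

lemma four_div_tau_le_c_tau: "i \<in> {1..I} \<Longrightarrow> 4 / tau i \<le> c_tau"
  unfolding c_tau_def by (rule member_le_sum) (use tau_pos in \<open>auto simp: less_imp_le\<close>)

lemma L_G_nonneg: "L_G \<ge> 0"
proof -
  have x0: "x 0 1 \<in> X" using init_x I_ge2 by simp
  then obtain \<xi> where "\<xi> \<in> subdiff U G (x 0 1)"
    using convex_on_has_subgradient[OF G_convex U_open] XU by blast
  from A2[OF x0 this] show ?thesis using norm_ge_zero[of \<xi>] by linarith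
qed

lemma L_F_nonneg: "L_F \<ge> 0"
proof -
  have "x 0 1 \<in> X" using init_x I_ge2 by simp
  from A1[OF this] show ?thesis using norm_ge_zero[of "\<Sum>i\<in>{1..I}. gradf i (x 0 1)"] by linarith
qed

lemma y_dev_average_le:
  assumes "i \<in> {1..I}" and "\<And>l. l \<in> {1..I} \<Longrightarrow> norm (y k i - y k l) \<le> M"
  shows "norm (y k i - (1 / real I) *\<^sub>R (\<Sum>j\<in>{1..I}. \<phi> k j *\<^sub>R y k j)) \<le> M"
  by (rule norm_diff_weighted_average_le)
     (use assms phi_pos phi_sum I_ge2 in \<open>auto simp: less_imp_le\<close>)

lemma norm_sum_gradients_le:
  assumes "\<And>j. j \<in> {1..I} \<Longrightarrow> norm (x k j - x k 1) \<le> D"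
  shows "norm (\<Sum>j\<in>{1..I}. gradf j (x k j)) \<le> L_F + Lsum * D"
proof -
  have x1: "x k 1 \<in> X" using x_in_X I_ge2 by simp
  have "norm (\<Sum>j\<in>{1..I}. gradf j (x k j) - gradf j (x k 1)) \<le> (\<Sum>j\<in>{1..I}. L j * D)"
  proof (rule order_trans[OF norm_sum sum_mono])
    fix j assume j: "j \<in> {1..I}"
    have "norm (gradf j (x k j) - gradf j (x k 1)) \<le> L j * norm (x k j - x k 1)"
      using lipschitz_onD[OF f_lip[OF j] x_in_X[OF j] x1] by (simp add: dist_norm)
    also have "\<dots> \<le> L j * D" using assms[OF j] L_nonneg[OF j] by (rule mult_left_mono)
    finally show "norm (gradf j (x k j) - gradf j (x k 1)) \<le> L j * D" .
  qed
  moreover have "(\<Sum>j\<in>{1..I}. gradf j (x k j))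
      = (\<Sum>j\<in>{1..I}. gradf j (x k 1)) + (\<Sum>j\<in>{1..I}. gradf j (x k j) - gradf j (x k 1))"
    by (simp add: sum_subtractf)
  ultimately show ?thesis
    using A1[OF x1] norm_triangle_ineq[of "\<Sum>j\<in>{1..I}. gradf j (x k 1)"]
    by (simp add: Lsum_def sum_distrib_right) (smt (verit))
qed

definition gap :: real where "gap = 2 * min_mix ^ T"

definition Ly :: real where "Ly = Lsum / \<kappa> ^ T"

text \<open>
  Scaling \<open>y\<close> down by \<open>y_scale\<close> makes the feedback \<open>Ly \<cdot> D / y_scale\<close> of the spread into the
  perturbation of \<open>y\<close> at most a quarter of the contraction margin \<open>gap \<cdot> D / T\<close>.
\<close>

definition y_scale :: real where "y_scale = 4 * real T * Ly / gap + 1"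

definition state :: "nat \<Rightarrow> nat \<Rightarrow> 'a \<times> 'a" where
  "state k i = (x k i, (1 / y_scale) *\<^sub>R y k i)"

definition spread_le :: "nat \<Rightarrow> real \<Rightarrow> bool" where
  "spread_le k D \<longleftrightarrow> (\<forall>i\<in>{1..I}. \<forall>l\<in>{1..I}. norm (state k i - state k l) \<le> D)"

definition resp_bound :: "real \<Rightarrow> real" where
  "resp_bound D = c_tau * (real I * y_scale * D + Lsum * D + L_F + L_G)"

lemma gap_pos: "gap > 0"
  using min_mix_pos by (simp add: gap_def)

lemma Ly_nonneg: "Ly \<ge> 0"
  using kappa_pos Lsum_nonneg by (simp add: Ly_def)

lemma y_scale_ge_one: "y_scale \<ge> 1"
  using Ly_nonneg gap_pos by (simp add: y_scale_def)

lemma state_diff: "state k i - state k l = (x k i - x k l, (1 / y_scale) *\<^sub>R (y k i - y k l))"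
  by (simp add: state_def scaleR_diff_right)

lemma spread_le_x:
  assumes "spread_le k D" "i \<in> {1..I}" "l \<in> {1..I}"
  shows "norm (x k i - x k l) \<le> D"
  using assms norm_fst_le[of "x k i - x k l"] unfolding spread_le_def state_diff
  by (meson order_trans)

lemma spread_le_y:
  assumes "spread_le k D" "i \<in> {1..I}" "l \<in> {1..I}"
  shows "norm (y k i - y k l) \<le> y_scale * D"
proof -
  have "norm ((1 / y_scale) *\<^sub>R (y k i - y k l)) \<le> D"
    using assms norm_snd_le[of "(1 / y_scale) *\<^sub>R (y k i - y k l)" "x k i - x k l"]
    unfolding spread_le_def state_diff by (meson order_trans)
  then have "\<bar>1 / y_scale\<bar> * norm (y k i - y k l) \<le> D" unfolding norm_scaleR .
  then show ?thesis using y_scale_ge_one by (simp add: field_simps)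
qed

lemma y_norm_le:
  assumes "spread_le k D" "i \<in> {1..I}"
  shows "norm (y k i) \<le> y_scale * D + (L_F + Lsum * D) / real I"
proof -
  define ybar where "ybar = (1 / real I) *\<^sub>R (\<Sum>j\<in>{1..I}. \<phi> k j *\<^sub>R y k j)"
  have "norm (y k i - ybar) \<le> y_scale * D"
    unfolding ybar_def by (rule y_dev_average_le) (use assms spread_le_y in auto)
  moreover have "norm ybar \<le> (L_F + Lsum * D) / real I"
    using norm_sum_gradients_le[of k D] spread_le_x[OF assms(1)] I_ge2
    unfolding ybar_def gradient_tracking by (simp add: divide_simps)
  ultimately show ?thesis using norm_triangle_ineq[of "y k i - ybar" ybar] by simp
qed

lemma best_response_dist_le:
  assumes "spread_le k D" "i \<in> {1..I}"
  shows "norm (x k i - xt k i) \<le> resp_bound D"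
proof -
  have xk: "x k i \<in> X" using x_in_X[OF assms(2)] .
  have "((\<lambda>z. ft i z (x k i)) has_derivative (\<lambda>h. gradf i (x k i) \<bullet> h)) (at (x k i))"
    using ft_deriv[OF assms(2) xk, of "x k i"] ft_grad_cons[OF assms(2) xk] xk XU by auto
  from best_response_norm_diff_le[OF X_convex XU U_open G_convex xk tau_pos[OF assms(2)]
      ft_sc[OF assms(2) xk] this xt_def[OF assms(2)] A2[OF xk]]
  have "norm (x k i - xt k i) \<le> 4 / tau i * (norm (real I *\<^sub>R y k i) + L_G)" .
  also have "\<dots> = 4 / tau i * (real I * norm (y k i) + L_G)" by simp
  also have "\<dots> \<le> c_tau * (real I * norm (y k i) + L_G)"
    using four_div_tau_le_c_tau[OF assms(2)] L_G_nonneg by (intro mult_right_mono) auto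
  also have "\<dots> \<le> c_tau * (real I * (y_scale * D + (L_F + Lsum * D) / real I) + L_G)"
    using y_norm_le[OF assms] four_div_tau_le_c_tau[OF assms(2)] tau_pos[OF assms(2)]
    by (intro mult_left_mono add_right_mono) (auto intro: order_trans[rotated])
  also have "\<dots> = resp_bound D" using I_ge2 by (simp add: resp_bound_def field_simps)
  finally show ?thesis .
qed

lemma x_perturbation_le:
  assumes "spread_le t D" "i \<in> {1..I}"
  shows "norm (x (Suc t) i - (\<Sum>j\<in>{1..I}. mix t i j *\<^sub>R x t j)) \<le> \<gamma> t * resp_bound D"
proof -
  have "x (Suc t) i - (\<Sum>j\<in>{1..I}. mix t i j *\<^sub>R x t j)
      = (\<Sum>j\<in>{1..I}. mix t i j *\<^sub>R (\<gamma> t *\<^sub>R (xt t j - x t j)))"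
    unfolding x_Suc[OF assms(2)] by (simp add: scaleR_add_right sum.distrib)
  also have "norm \<dots> \<le> \<gamma> t * resp_bound D"
  proof (rule norm_convex_combination_le[OF finite_atLeastAtMost _ row_stochastic[OF assms(2)]])
    fix j assume j: "j \<in> {1..I}"
    show "mix t i j \<ge> 0" using weight_nonneg[OF assms(2) j] .
    have "norm (\<gamma> t *\<^sub>R (xt t j - x t j)) = \<gamma> t * norm (x t j - xt t j)"
      using A3_range[of t] by (simp add: norm_minus_commute)
    also have "\<dots> \<le> \<gamma> t * resp_bound D"
      using best_response_dist_le[OF assms(1) j] A3_range[of t] by (intro mult_left_mono) auto
    finally show "norm (\<gamma> t *\<^sub>R (xt t j - x t j)) \<le> \<gamma> t * resp_bound D" .
  qed
  finally show ?thesis .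
qed

lemma x_step_le:
  assumes "spread_le t D" "i \<in> {1..I}"
  shows "norm (x (Suc t) i - x t i) \<le> D + \<gamma> t * resp_bound D"
proof -
  have "(\<Sum>j\<in>{1..I}. mix t i j *\<^sub>R (x t j - x t i))
      = (\<Sum>j\<in>{1..I}. mix t i j *\<^sub>R x t j) - x t i"
    using row_stochastic[OF assms(2), of t]
    by (simp add: scaleR_diff_right sum_subtractf scaleR_sum_left[symmetric])
  moreover have "norm (\<Sum>j\<in>{1..I}. mix t i j *\<^sub>R (x t j - x t i)) \<le> D"
    by (rule norm_convex_combination_le[OF finite_atLeastAtMost])
       (use weight_nonneg[OF assms(2)] row_stochastic[OF assms(2)] spread_le_x[OF assms(1)] assms(2)
         in auto)
  ultimately show ?thesis
    using x_perturbation_le[OF assms]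
      norm_triangle_ineq[of "x (Suc t) i - (\<Sum>j\<in>{1..I}. mix t i j *\<^sub>R x t j)"
        "(\<Sum>j\<in>{1..I}. mix t i j *\<^sub>R x t j) - x t i"]
    by simp
qed

lemma y_perturbation_le:
  assumes "spread_le t D" "i \<in> {1..I}"
  shows "norm (y (Suc t) i - (\<Sum>j\<in>{1..I}. mix t i j *\<^sub>R y t j)) \<le> Ly * (D + \<gamma> t * resp_bound D)"
proof -
  have phi: "\<phi> (Suc t) i \<ge> \<kappa> ^ T" "\<kappa> ^ T > 0"
    using phi_lower[OF assms(2)] kappa_pos by auto
  have step: "0 \<le> D + \<gamma> t * resp_bound D"
    using x_step_le[OF assms] norm_ge_zero order_trans by blast
  have "norm (y (Suc t) i - (\<Sum>j\<in>{1..I}. mix t i j *\<^sub>R y t j))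
      = norm (gradf i (x (Suc t) i) - gradf i (x t i)) / \<phi> (Suc t) i"
    using y_Suc[OF assms(2)] phi by simp
  also have "\<dots> \<le> L i * norm (x (Suc t) i - x t i) / \<phi> (Suc t) i"
    using lipschitz_onD[OF f_lip[OF assms(2)] x_in_X[OF assms(2)] x_in_X[OF assms(2)]] phi
    by (intro divide_right_mono) (auto simp: dist_norm)
  also have "\<dots> \<le> Lsum * (D + \<gamma> t * resp_bound D) / \<phi> (Suc t) i"
    using L_le_Lsum[OF assms(2)] L_nonneg[OF assms(2)] x_step_le[OF assms] phi step
    by (intro divide_right_mono mult_mono) auto
  also have "\<dots> \<le> Lsum * (D + \<gamma> t * resp_bound D) / \<kappa> ^ T"
    using phi step L_nonneg[OF assms(2)] L_le_Lsum[OF assms(2)]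
    by (intro divide_left_mono mult_nonneg_nonneg) auto
  finally show ?thesis by (simp add: Ly_def)
qed

definition perturbation :: "nat \<Rightarrow> real" where
  "perturbation t = Max ((\<lambda>i. norm (state (Suc t) i - (\<Sum>j\<in>{1..I}. mix t i j *\<^sub>R state t j))) ` {1..I})"

lemma perturbation_ge:
  "i \<in> {1..I} \<Longrightarrow> norm (state (Suc t) i - (\<Sum>j\<in>{1..I}. mix t i j *\<^sub>R state t j)) \<le> perturbation t"
  unfolding perturbation_def by (rule Max_ge) auto

lemma state_perturbation_le:
  assumes "spread_le t D" "i \<in> {1..I}"
  shows "norm (state (Suc t) i - (\<Sum>j\<in>{1..I}. mix t i j *\<^sub>R state t j))
      \<le> \<gamma> t * resp_bound D + Ly * (D + \<gamma> t * resp_bound D) / y_scale"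
proof -
  have "state (Suc t) i - (\<Sum>j\<in>{1..I}. mix t i j *\<^sub>R state t j)
      = (x (Suc t) i - (\<Sum>j\<in>{1..I}. mix t i j *\<^sub>R x t j),
         (1 / y_scale) *\<^sub>R (y (Suc t) i - (\<Sum>j\<in>{1..I}. mix t i j *\<^sub>R y t j)))"
    by (simp add: state_def prod_eq_iff fst_sum snd_sum scaleR_sum_right scaleR_diff_right)
  moreover have "norm ((1 / y_scale) *\<^sub>R (y (Suc t) i - (\<Sum>j\<in>{1..I}. mix t i j *\<^sub>R y t j)))
      \<le> Ly * (D + \<gamma> t * resp_bound D) / y_scale"
    using y_perturbation_le[OF assms] y_scale_ge_one by (simp add: divide_right_mono)
  ultimately show ?thesis
    using norm_Pair_le x_perturbation_le[OF assms] by (smt (verit))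
qed

lemma perturbation_le:
  assumes "spread_le t D"
  shows "perturbation t \<le> \<gamma> t * resp_bound D + Ly * (D + \<gamma> t * resp_bound D) / y_scale"
  unfolding perturbation_def
  by (subst Max_le_iff) (use state_perturbation_le[OF assms] I_ge2 in auto)

definition resp_rate :: real where
  "resp_rate = c_tau * (real I * y_scale + Lsum + L_F + L_G)"

definition step_tol :: real where
  "step_tol = gap / (4 * real T * resp_rate * (1 + Ly) + 1)"

lemma resp_rate_nonneg: "resp_rate \<ge> 0"
  using c_tau_nonneg y_scale_ge_one Lsum_nonneg L_F_nonneg L_G_nonneg by (simp add: resp_rate_def)

lemma resp_bound_nonneg: "D \<ge> 0 \<Longrightarrow> resp_bound D \<ge> 0"
  using c_tau_nonneg y_scale_ge_one Lsum_nonneg L_F_nonneg L_G_nonneg by (simp add: resp_bound_def)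

lemma resp_bound_le:
  assumes "D \<ge> 1"
  shows "resp_bound D \<le> resp_rate * D"
proof -
  have "L_F + L_G \<le> (L_F + L_G) * D"
    using assms L_F_nonneg L_G_nonneg mult_left_mono[of 1 D "L_F + L_G"] by simp
  then have "real I * y_scale * D + Lsum * D + L_F + L_G \<le> (real I * y_scale + Lsum + L_F + L_G) * D"
    by (simp add: algebra_simps)
  from mult_left_mono[OF this c_tau_nonneg] show ?thesis
    by (simp add: resp_bound_def resp_rate_def mult.assoc)
qed

lemma step_tol_denominator_pos: "4 * real T * resp_rate * (1 + Ly) + 1 > 0"
proof -
  have "0 \<le> 4 * real T * resp_rate * (1 + Ly)" using resp_rate_nonneg Ly_nonneg by simp
  then show ?thesis by linarith
qed

lemma step_tol_pos: "step_tol > 0"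
  using gap_pos step_tol_denominator_pos by (simp add: step_tol_def)

lemma perturbation_small:
  assumes D: "D \<ge> 1" and spread: "spread_le t D" and \<gamma>: "\<gamma> t \<le> step_tol"
  shows "2 * real T * perturbation t \<le> gap * D"
proof -
  define R where "R = resp_bound D"
  have R: "0 \<le> R" "R \<le> resp_rate * D" using resp_bound_nonneg resp_bound_le D by (auto simp: R_def)
  have \<gamma>0: "0 \<le> \<gamma> t" using A3_range[of t] by simp
  have ratio: "0 \<le> Ly / y_scale" "Ly / y_scale \<le> Ly"
    using Ly_nonneg y_scale_ge_one mult_left_mono[of 1 y_scale Ly] by (auto simp: divide_le_eq)
  have "perturbation t \<le> \<gamma> t * R * (1 + Ly / y_scale) + Ly / y_scale * D"
    using perturbation_le[OF spread] by (simp add: R_def algebra_simps add_divide_distrib)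
  also have "\<gamma> t * R * (1 + Ly / y_scale) \<le> step_tol * (resp_rate * D) * (1 + Ly)"
    using \<gamma> \<gamma>0 R ratio by (intro mult_mono) auto
  finally have "perturbation t \<le> (step_tol * resp_rate * (1 + Ly) + Ly / y_scale) * D"
    by (simp add: algebra_simps)
  moreover define rate where "rate = step_tol * resp_rate * (1 + Ly) + Ly / y_scale"
  ultimately have p: "2 * real T * perturbation t \<le> 2 * real T * (rate * D)"
    by (intro mult_left_mono) auto
  have "4 * real T * (step_tol * resp_rate * (1 + Ly)) \<le> gap"
  proof -
    have "step_tol * (4 * real T * resp_rate * (1 + Ly) + 1) = gap"
      using step_tol_denominator_pos by (simp add: step_tol_def)
    thus ?thesis using step_tol_pos by (simp add: algebra_simps)
  qed
  moreover have "4 * real T * (Ly / y_scale) \<le> gap"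
  proof -
    have "gap * y_scale = 4 * real T * Ly + gap" using gap_pos by (simp add: y_scale_def field_simps)
    thus ?thesis using y_scale_ge_one Ly_nonneg gap_pos by (simp add: field_simps)
  qed
  ultimately have "4 * real T * rate \<le> 2 * gap"
    unfolding rate_def by (simp only: distrib_left)
  then have "4 * real T * rate * D \<le> 2 * gap * D"
    using D by (intro mult_right_mono) auto
  moreover have "2 * (2 * real T * (rate * D)) = 4 * real T * rate * D" by simp
  ultimately show ?thesis using p by linarith
qed

lemma spread_step:
  assumes D: "D \<ge> 1" and window: "\<And>d. d < T \<Longrightarrow> spread_le (k + d) D \<and> \<gamma> (k + d) \<le> step_tol"
  shows "spread_le (k + T) D"
  unfolding spread_le_def
proof (intro ballI)
  fix i l assume i: "i \<in> {1..I}" and l: "l \<in> {1..I}"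
  have "spread_le k D" using window[of 0] I_ge2 B_pos by simp
  then have "norm (state (k + T) i - state (k + T) l)
      \<le> (1 - gap) * D + 2 * (\<Sum>d<T. perturbation (k + d))"
    unfolding gap_def
    by (intro consensus_contraction[OF perturbation_ge _ two_min_mix_power_le reach_all i l])
       (auto simp: spread_le_def)
  moreover have "2 * (\<Sum>d<T. perturbation (k + d)) \<le> gap * D"
  proof -
    have "(\<Sum>d<T. 2 * real T * perturbation (k + d)) \<le> (\<Sum>d<T. gap * D)"
      using perturbation_small[OF D] window by (intro sum_mono) auto
    then have "real T * (2 * (\<Sum>d<T. perturbation (k + d))) \<le> real T * (gap * D)"
      by (simp add: sum_distrib_left algebra_simps)
    moreover have "real T > 0" using T_pos by (simp only: of_nat_0_less_iff)
    ultimately show ?thesis by (rule mult_left_le_imp_le)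
  qed
  moreover have "(1 - gap) * D + gap * D = D" by (simp add: algebra_simps)
  ultimately show "norm (state (k + T) i - state (k + T) l) \<le> D" by linarith
qed

lemma spread_bounded: "\<exists>D. \<forall>k. spread_le k D"
proof -
  have "eventually (\<lambda>t. (\<gamma> t)\<^sup>2 < step_tol\<^sup>2) sequentially"
    using order_tendstoD(2)[OF summable_LIMSEQ_zero[OF A3_sq], of "step_tol\<^sup>2"] step_tol_pos
    by simp
  then obtain K0 where "\<And>t. t \<ge> K0 \<Longrightarrow> (\<gamma> t)\<^sup>2 < step_tol\<^sup>2"
    unfolding eventually_sequentially by blast
  then have K0: "\<gamma> t \<le> step_tol" if "t \<ge> K0" for t
    using power2_less_imp_less[of "\<gamma> t" step_tol] step_tol_pos that by fastforce
  define F where "F = (\<lambda>(k, i, l). norm (state k i - state k l))"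
  define D where "D = 1 + (\<Sum>q\<in>{..<K0 + T} \<times> ({1..I} \<times> {1..I}). F q)"
  have "0 \<le> (\<Sum>q\<in>{..<K0 + T} \<times> ({1..I} \<times> {1..I}). F q)"
    by (rule sum_nonneg) (simp add: F_def split: prod.splits)
  then have D: "D \<ge> 1" by (simp add: D_def)
  have "spread_le k D" for k
  proof (induction k rule: nat_block_induct[OF T_pos, where N = K0])
    case (1 k)
    have "F (k, i, l) \<le> (\<Sum>q\<in>{..<K0 + T} \<times> ({1..I} \<times> {1..I}). F q)" if "i \<in> {1..I}" "l \<in> {1..I}" for i l
      by (rule member_le_sum) (use 1 that in \<open>auto simp: F_def\<close>)
    then show ?case by (fastforce simp: spread_le_def D_def F_def)
  next
    case (2 k)
    then show ?case using spread_step[OF D] K0 by simp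
  qed
  then show ?thesis by blast
qed

lemma y_consensus_bounded:
  "i \<in> {1..I} \<Longrightarrow>
     bdd_above (range (\<lambda>k. norm (y k i - (1 / real I) *\<^sub>R (\<Sum>j\<in>{1..I}. \<phi> k j *\<^sub>R y k j))))"
  using spread_bounded y_dev_average_le spread_le_y by (meson bdd_aboveI2)

lemma best_response_bounded: "i \<in> {1..I} \<Longrightarrow> bdd_above (range (\<lambda>k. norm (x k i - xt k i)))"
  using spread_bounded best_response_dist_le by (meson bdd_aboveI2)

end

theorem mainTheorem17:
  fixes I B :: nat
    and X U :: "'a::euclidean_space set"
    and f :: "nat \<Rightarrow> 'a \<Rightarrow> real" and gradf :: "nat \<Rightarrow> 'a \<Rightarrow> 'a"
    and G :: "'a \<Rightarrow> real"
    and L Lt tau :: "nat \<Rightarrow> real" and L_F L_G :: real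
    and ft :: "nat \<Rightarrow> 'a \<Rightarrow> 'a \<Rightarrow> real" and gradft :: "nat \<Rightarrow> 'a \<Rightarrow> 'a \<Rightarrow> 'a"
    and E :: "nat \<Rightarrow> (nat \<times> nat) set"
    and a :: "nat \<Rightarrow> nat \<Rightarrow> nat \<Rightarrow> real"
    and \<kappa> :: real
    and \<gamma> :: "nat \<Rightarrow> real"
    and x xt y :: "nat \<Rightarrow> nat \<Rightarrow> 'a"
    and \<phi> :: "nat \<Rightarrow> nat \<Rightarrow> real"
  assumes I_ge2: "I \<ge> 2"
    and X_ne: "X \<noteq> {}" and X_closed: "closed X" and X_convex: "convex X"
    and U_open: "open U" and XU: "X \<subseteq> U"
    and f_deriv: "\<And>i z. i \<in> {1..I} \<Longrightarrow> z \<in> U \<Longrightarrow>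
                    (f i has_derivative (\<lambda>h. gradf i z \<bullet> h)) (at z)"
    and f_C1: "\<And>i. i \<in> {1..I} \<Longrightarrow> continuous_on U (gradf i)"
    and f_lip: "\<And>i. i \<in> {1..I} \<Longrightarrow> (L i)-lipschitz_on X (gradf i)"
    and G_convex: "convex_on U G"
    and V_bdd: "bdd_below ((\<lambda>z. (\<Sum>i\<in>{1..I}. f i z) + G z) ` X)"
    and E_sub: "\<And>k. E k \<subseteq> {1..I} \<times> {1..I}"
    and B_pos: "B \<ge> 1"
    and B_conn: "B_strongly_connected I B E"
    and kappa_pos: "\<kappa> > 0"
    and a_nonneg: "\<And>k i j. i \<in> {1..I} \<Longrightarrow> j \<in> {1..I} \<Longrightarrow> a k i j \<ge> 0"
    and a_zero: "\<And>k i j. i \<in> {1..I} \<Longrightarrow> j \<in> {1..I} \<Longrightarrow> j \<noteq> i \<Longrightarrow> (j, i) \<notin> E k \<Longrightarrow> a k i j = 0"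
    and a_edge: "\<And>k i j. i \<in> {1..I} \<Longrightarrow> j \<in> {1..I} \<Longrightarrow> (j, i) \<in> E k \<Longrightarrow> a k i j \<ge> \<kappa>"
    and a_diag: "\<And>k i. i \<in> {1..I} \<Longrightarrow> a k i i \<ge> \<kappa>"
    and a_colstoch: "\<And>k j. j \<in> {1..I} \<Longrightarrow> (\<Sum>i\<in>{1..I}. a k i j) = 1"
    and tau_pos: "\<And>i. i \<in> {1..I} \<Longrightarrow> tau i > 0"
    and ft_sc: "\<And>i w. i \<in> {1..I} \<Longrightarrow> w \<in> X \<Longrightarrow> strongly_convex_on X (tau i) (\<lambda>z. ft i z w)"
    and ft_deriv: "\<And>i w z. i \<in> {1..I} \<Longrightarrow> w \<in> X \<Longrightarrow> z \<in> U \<Longrightarrow>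
                    ((\<lambda>z. ft i z w) has_derivative (\<lambda>h. gradft i z w \<bullet> h)) (at z)"
    and ft_C1: "\<And>i w. i \<in> {1..I} \<Longrightarrow> w \<in> X \<Longrightarrow> continuous_on U (\<lambda>z. gradft i z w)"
    and ft_grad_cons: "\<And>i z. i \<in> {1..I} \<Longrightarrow> z \<in> X \<Longrightarrow> gradft i z z = gradf i z"
    and ft_lip: "\<And>i z. i \<in> {1..I} \<Longrightarrow> z \<in> X \<Longrightarrow> (Lt i)-lipschitz_on X (\<lambda>w. gradft i z w)"
    and A1: "\<And>z. z \<in> X \<Longrightarrow> norm (\<Sum>i\<in>{1..I}. gradf i z) \<le> L_F"
    and A2: "\<And>z \<xi>. z \<in> X \<Longrightarrow> \<xi> \<in> subdiff U G z \<Longrightarrow> norm \<xi> \<le> L_G"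
    and A3_range: "\<And>k. \<gamma> k \<in> {0<..1}"
    and A3_div: "filterlim (\<lambda>n. \<Sum>k<n. \<gamma> k) at_top sequentially"
    and A3_sq: "summable (\<lambda>k. (\<gamma> k)\<^sup>2)"
    and init_x: "\<And>i. i \<in> {1..I} \<Longrightarrow> x 0 i \<in> X"
    and init_phi: "\<And>i. i \<in> {1..I} \<Longrightarrow> \<phi> 0 i = 1"
    and init_y: "\<And>i. i \<in> {1..I} \<Longrightarrow> y 0 i = gradf i (x 0 i)"
    and xt_def: "\<And>k i. i \<in> {1..I} \<Longrightarrow>
        is_arg_min (\<lambda>z. ft i z (x k i) + (real I *\<^sub>R y k i - gradf i (x k i)) \<bullet> (z - x k i) + G z)
                   (\<lambda>z. z \<in> X) (xt k i)"
    and phi_upd: "\<And>k i. i \<in> {1..I} \<Longrightarrow> \<phi> (Suc k) i = (\<Sum>j\<in>{1..I}. a k i j * \<phi> k j)"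
    and x_upd: "\<And>k i. i \<in> {1..I} \<Longrightarrow> x (Suc k) i =
        (1 / \<phi> (Suc k) i) *\<^sub>R
          (\<Sum>j\<in>{1..I}. (a k i j * \<phi> k j) *\<^sub>R (x k j + \<gamma> k *\<^sub>R (xt k j - x k j)))"
    and y_upd: "\<And>k i. i \<in> {1..I} \<Longrightarrow> y (Suc k) i =
        (1 / \<phi> (Suc k) i) *\<^sub>R (\<Sum>j\<in>{1..I}. (a k i j * \<phi> k j) *\<^sub>R y k j)
        + (1 / \<phi> (Suc k) i) *\<^sub>R (gradf i (x (Suc k) i) - gradf i (x k i))"
  shows
    "(let S = {\<phi> k i | k i. i \<in> {1..I}}; \<phi>_lb = Inf S; \<phi>_ub = Sup S in
        bdd_below S \<and> bdd_above S \<and>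
        (\<forall>k. \<forall>i\<in>{1..I}. \<phi>_lb \<le> \<phi> k i \<and> \<phi> k i \<le> \<phi>_ub) \<and>
        \<phi>_lb \<ge> \<kappa> ^ (2 * (I - 1) * B) \<and> \<kappa> ^ (2 * (I - 1) * B) > 0 \<and>
        \<phi>_ub \<le> real I - \<kappa> ^ (2 * (I - 1) * B))
     \<and> (\<forall>i\<in>{1..I}. bdd_above (range (\<lambda>k.
          norm (y k i - (1 / real I) *\<^sub>R (\<Sum>j\<in>{1..I}. \<phi> k j *\<^sub>R y k j)))))
     \<and> (\<forall>i\<in>{1..I}. bdd_above (range (\<lambda>k. norm (x k i - xt k i))))"
  proof -
  interpret sonata I B X U gradf G L tau L_F L_G ft gradft E a \<kappa> \<gamma> x xt y \<phi>
    by unfold_locales (rule assms; assumption)+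
  show ?thesis
    by (rule conjI[OF phi_bounds conjI]; rule ballI) (erule y_consensus_bounded best_response_bounded)+
qed

end
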